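(* Let $g\in\mathrm{O}(n)$ and let $1\le m<p\le n$. Write $g=\begin{pmatrix}P&Q\\ R&T\end{pmatrix}$ with blocks of sizes $(m+(n-m))\times(m+(n-m))$, assume $1+P$ is invertible, and set $\Upsilon^m(g)=T-R(1+P)^{-1}Q$. For a matrix $A$ let $[A]_k$ denote its upper left $k\times k$ corner. Then $$\det\big(1+[g]_p\big)=\det\big(1+[g]_m\big)\,\det\big(1+[\Upsilon^m(g)]_{p-m}\big).$$ *)

theory Defs
  imports "Jordan_Normal_Form.Gauss_Jordan_Elimination" "Jordan_Normal_Form.Determinant"
begin

definition orth_group :: "nat \<Rightarrow> real mat set" where
  "orth_group n = {g \<in> carrier_mat n n. transpose_mat g * g = 1\<^sub>m n}"

definition corner :: "nat \<Rightarrow> 'a mat \<Rightarrow> 'a mat" where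
  "corner k A = mat k k (\<lambda>(i,j). A $$ (i,j))"

definition upsilon :: "nat \<Rightarrow> real mat \<Rightarrow> real mat" where
  "upsilon m g = (case split_block g m m of (P, Q, R, T) \<Rightarrow>
      T - R * the (mat_inverse (1\<^sub>m m + P)) * Q)"

end

theory Submission
  imports Defs
begin

text \<open>With \<open>k = p - m\<close>, the matrix \<open>1 + [g]\<^sub>p\<close> is the block matrix with diagonal blocks
  \<open>1 + P\<close> and \<open>1 + [T]\<^sub>k\<close> and off-diagonal blocks the leading parts of \<open>Q\<close> and \<open>R\<close>.
  Its Schur complement with respect to \<open>1 + P\<close> is \<open>1 + [T]\<^sub>k - [R] (1 + P)\<^sup>-\<^sup>1 [Q]\<close>, which is
  \<open>1 + [\<Upsilon>\<^sup>m(g)]\<^sub>k\<close> because taking leading submatrices commutes with the product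
  \<open>R (1 + P)\<^sup>-\<^sup>1 Q\<close>: the inner dimension \<open>m\<close> is not truncated.\<close>

lemma det_four_block_mat_schur:
  fixes A :: "'a :: idom mat"
  assumes A: "A \<in> carrier_mat m m" and Ai: "Ai \<in> carrier_mat m m" and inv: "Ai * A = 1\<^sub>m m"
    and B: "B \<in> carrier_mat m k" and C: "C \<in> carrier_mat k m" and D: "D \<in> carrier_mat k k"
  shows "det (four_block_mat A B C D) = det A * det (D - C * Ai * B)"
proof -
  let ?S = "D - C * Ai * B"
  let ?L = "four_block_mat (1\<^sub>m m) (0\<^sub>m m k) (C * Ai) (1\<^sub>m k)"
  let ?U = "four_block_mat A B (0\<^sub>m k m) ?S"
  have S: "?S \<in> carrier_mat k k" and CAi: "C * Ai \<in> carrier_mat k m" using Ai B C D by auto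
  have "?L * ?U = four_block_mat (1\<^sub>m m * A + 0\<^sub>m m k * 0\<^sub>m k m) (1\<^sub>m m * B + 0\<^sub>m m k * ?S)
        (C * Ai * A + 1\<^sub>m k * 0\<^sub>m k m) (C * Ai * B + 1\<^sub>m k * ?S)"
    by (rule mult_four_block_mat[OF _ _ CAi _ A B _ S]) auto
  also have "C * Ai * A = C"
    using A Ai C inv by (simp add: assoc_mult_mat[OF C Ai A])
  also have "C * Ai * B + 1\<^sub>m k * ?S = D"
    using Ai B C D by (intro eq_matI) auto
  finally have factor: "four_block_mat A B C D = ?L * ?U"
    using A B C S by simp
  have "det ?L = 1"
    by (subst det_four_block_mat_upper_right_zero[OF _ refl CAi]) auto
  moreover have "det ?U = det A * det ?S"
    by (rule det_four_block_mat_lower_left_zero[OF A B refl S])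
  ultimately show ?thesis
    unfolding factor using A B S CAi by (subst det_mult[of _ "m + k"]) auto
qed

definition upper_left_submat :: "nat \<Rightarrow> nat \<Rightarrow> 'a mat \<Rightarrow> 'a mat" where
  "upper_left_submat r c A = mat r c (\<lambda>(i, j). A $$ (i, j))"

lemma upper_left_submat_carrier [simp]: "upper_left_submat r c A \<in> carrier_mat r c"
  unfolding upper_left_submat_def by simp

lemma upper_left_submat_id:
  assumes "A \<in> carrier_mat r c"
  shows "upper_left_submat r c A = A"
  using assms unfolding upper_left_submat_def by (intro eq_matI) auto

lemma upper_left_submat_mult:
  fixes X :: "'a :: semiring_0 mat"
  assumes "X \<in> carrier_mat a c" and "Y \<in> carrier_mat c b" and "a' \<le> a" and "b' \<le> b"
  shows "upper_left_submat a' b' (X * Y) = upper_left_submat a' c X * upper_left_submat c b' Y"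
  using assms unfolding upper_left_submat_def by (intro eq_matI) (auto simp: scalar_prod_def)

lemma one_plus_corner_split_block:
  fixes g :: "'a :: semiring_1 mat"
  assumes g: "g \<in> carrier_mat n n" and sb: "split_block g m m = (P, Q, R, T)" and mk: "m + k \<le> n"
  shows "1\<^sub>m (m + k) + corner (m + k) g
    = four_block_mat (1\<^sub>m m + P) (upper_left_submat m k Q) (upper_left_submat k m R)
        (1\<^sub>m k + corner k T)"
  using sb g mk unfolding split_block_def Let_def corner_def upper_left_submat_def
  by (intro eq_matI) auto

lemma corner_upsilon:
  assumes g: "g \<in> carrier_mat n n" and sb: "split_block g m m = (P, Q, R, T)"
    and Ai: "mat_inverse (1\<^sub>m m + P) = Some Ai" "Ai \<in> carrier_mat m m" and mk: "m + k \<le> n"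
  shows "corner k (upsilon m g)
    = corner k T - upper_left_submat k m R * Ai * upper_left_submat m k Q"
proof -
  have dims: "dim_row g = m + (n - m)" "dim_col g = m + (n - m)"
    using g mk by auto
  have k: "k \<le> n - m"
    using mk by simp
  note blocks = split_block[OF sb dims]
  have RAi: "R * Ai \<in> carrier_mat (n - m) m"
    using blocks Ai by auto
  have "upper_left_submat k k (R * Ai * Q)
      = upper_left_submat k m R * upper_left_submat m m Ai * upper_left_submat m k Q"
    unfolding upper_left_submat_mult[OF RAi blocks(2) k k]
      upper_left_submat_mult[OF blocks(3) Ai(2) k order_refl] ..
  also have "upper_left_submat m m Ai = Ai"
    using Ai(2) by (rule upper_left_submat_id)
  finally have "upper_left_submat k k (R * Ai * Q)
      = upper_left_submat k m R * Ai * upper_left_submat m k Q" .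
  moreover have "upsilon m g = T - R * Ai * Q"
    unfolding upsilon_def sb using Ai(1) by simp
  moreover have "corner k (T - R * Ai * Q) = corner k T - upper_left_submat k k (R * Ai * Q)"
    using blocks Ai k unfolding corner_def upper_left_submat_def by (intro eq_matI) auto
  ultimately show ?thesis by simp
qed

lemma mat_inverse_if_invertible_mat:
  fixes A :: "'a :: field mat"
  assumes A: "A \<in> carrier_mat n n" and "invertible_mat A"
  obtains Ai where "mat_inverse A = Some Ai" and "Ai \<in> carrier_mat n n" and "Ai * A = 1\<^sub>m n"
proof -
  from assms obtain B where AB: "A * B = 1\<^sub>m n" and BA: "B * A = 1\<^sub>m (dim_row B)"
    unfolding invertible_mat_def inverts_mat_def by auto
  have "B \<in> carrier_mat n n"
    using arg_cong[OF AB, of dim_col] arg_cong[OF BA, of dim_col] A by auto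
  with A AB BA have "A \<in> Units (ring_mat TYPE('a) n ())"
    unfolding Units_def ring_mat_def by auto
  then obtain Ai where "mat_inverse A = Some Ai"
    using mat_inverse(1)[OF A] by fastforce
  with mat_inverse(2)[OF A this] show ?thesis
    using that by blast
qed

theorem proposition2p4:
  fixes n m p :: nat and g :: "real mat"
  assumes "g \<in> orth_group n"
    and "1 \<le> m" and "m < p" and "p \<le> n"
    and "invertible_mat (1\<^sub>m m + corner m g)"
  shows "det (1\<^sub>m p + corner p g)
         = det (1\<^sub>m m + corner m g) * det (1\<^sub>m (p - m) + corner (p - m) (upsilon m g))"
proof -
  define k where "k = p - m"
  have p: "p = m + k" and mk: "m + k \<le> n"
    using assms(3,4) unfolding k_def by auto
  have g: "g \<in> carrier_mat n n"
    using assms(1) unfolding orth_group_def by auto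
  obtain P Q R T where sb: "split_block g m m = (P, Q, R, T)"
    by (metis prod_cases4)
  have P: "P = corner m g"
    using sb unfolding split_block_def Let_def corner_def by auto
  obtain Ai where Ai: "mat_inverse (1\<^sub>m m + P) = Some Ai" "Ai \<in> carrier_mat m m"
      "Ai * (1\<^sub>m m + P) = 1\<^sub>m m"
    using mat_inverse_if_invertible_mat[of "1\<^sub>m m + P" m] assms(5) unfolding P corner_def by auto
  let ?B = "upper_left_submat m k Q" and ?C = "upper_left_submat k m R"
  have "det (1\<^sub>m p + corner p g) = det (four_block_mat (1\<^sub>m m + P) ?B ?C (1\<^sub>m k + corner k T))"
    unfolding p using one_plus_corner_split_block[OF g sb mk] by simp
  also have "\<dots> = det (1\<^sub>m m + P) * det (1\<^sub>m k + corner k T - ?C * Ai * ?B)"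
    using Ai unfolding P corner_def by (intro det_four_block_mat_schur) auto
  also have "1\<^sub>m k + corner k T - ?C * Ai * ?B = 1\<^sub>m k + corner k (upsilon m g)"
    unfolding corner_upsilon[OF g sb Ai(1,2) mk] using Ai(2)
    by (intro eq_matI) (auto simp: corner_def upper_left_submat_def)
  finally show ?thesis
    unfolding P k_def .
qed

end
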